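(* Under the setting and hypothesis of Theorem 4 (recalled in the context), let $U=\{U_1,\dots,U_L\}$ be a partition of $[n]$ that is conditionally independent of $Y_{1:n}$ given $(X_{1:n},A_{1:n})$. Let $N_l^0=|U_l\cap I_{A=0}|$, $\bar U_l=U_l\cup I_{A=1}$, and, assuming $N^{(0)}\ge1$, $\alpha_l=\dfrac{N_l^0N^{(0)}}{\sum_{l'=1}^L(N_{l'}^0)^2}\,\alpha$. For each $l$ with $N_l^0\ge1$, let $\hat C^l$ be the set $\hat C^2$ of the context computed from the data indexed by $\bar U_l$ only (with all distinct feature values, counts and $N^{(0)}$ computed within $\bar U_l$) at level $\alpha_l$ in place of $\alpha$. For $i\in I_{A=0}$ let $l_i$ satisfy $i\in U_{l_i}$ and set $\hat C^2_U(X_i,i)=\hat C^{l_i}(X_i)$. Then $$\mathbb E\Big[\Big(\frac{1}{N^{(0)}}\sum_{i\in I_{A=0}}\mathbf 1\{Y_i\notin\hat C_U^2(X_i,i)\}\Big)^2\ \Big|\ X_{1:n},A_{1:n}\Big]\le\alpha^2.$$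
   Context: Setting: $(X_i,A_i,Y_i)_{1\le i\le n}$ random, $Y_i$ observed only when $A_i=1$; $X'_1,\dots,X'_M$ distinct feature values, $I_k=\{i:X_i=X'_k\}$; hypothesis: conditionally on $(X_{1:n},A_{1:n})$ the law of $Y_{1:n}$ is invariant under permutations of $[n]$ preserving each $I_k$. $s$ fixed measurable score, $S_i=s(X_i,Y_i)$, $\bar S_i=S_i$ if $A_i=1$ and $+\infty$ if $A_i=0$. $I_{A=0}=\{i:A_i=0\}$, $I_{A=1}=\{i:A_i=1\}$, $N^{(0)}=|I_{A=0}|$, $N_k=|I_k|$, $N_k^0=|I_k\cap I_{A=0}|$. For a dataset with $N^{(0)}\ge1$ and level $\beta$, $\hat C^2(x)=\{y:s(x,y)\le Q_{1-\beta^2}(\Pi)\}$ where $\Pi=\sum_k\sum_{i\in I_k}\frac{N_k^0}{(N^{(0)})^2N_k}\delta_{\bar S_i}+\sum_k\sum_{i\ne j\in I_k}\frac{N_k^0(N_k^0-1)}{(N^{(0)})^2N_k(N_k-1)}\delta_{\min\{\bar S_i,\bar S_j\}}+\sum_{k\ne k'}\sum_{i\in I_k,j\in I_{k'}}\frac{N_k^0N_{k'}^0}{(N^{(0)})^2N_kN_{k'}}\delta_{\min\{\bar S_i,\bar S_j\}}$ (the middle coefficient is $0$ if $N_k=1$), and $Q_{1-\gamma}(P)=\inf\{t:\mathbb P_{T\sim P}(T\le t)\ge1-\gamma\}$ (with $Q_{1-\gamma}=+\infty$ convention-free: if $\gamma\ge1$ the quantile is $-\infty$ or the infimum of the support as given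 by the formula). Miscoverage proportions over empty index sets are $0$. *)

theory Defs
  imports "HOL-Probability.Probability"
begin

(* Conformal construction C^2 of the context, computed from the data indexed by a
   finite index set J (features x, missingness indicators a, outcomes y, score s). *)

definition cls :: "(nat \<Rightarrow> 'x) \<Rightarrow> nat set \<Rightarrow> nat \<Rightarrow> nat set" where
  "cls x J i = {j \<in> J. x j = x i}"

definition zeros :: "(nat \<Rightarrow> bool) \<Rightarrow> nat set \<Rightarrow> nat set" where
  "zeros a J = {i \<in> J. \<not> a i}"

definition sbar :: "('x \<Rightarrow> 'y \<Rightarrow> real) \<Rightarrow> (nat \<Rightarrow> 'x) \<Rightarrow> (nat \<Rightarrow> bool) \<Rightarrow> (nat \<Rightarrow> 'y) \<Rightarrow> nat \<Rightarrow> ereal" where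
  "sbar s x a y i = (if a i then ereal (s (x i) (y i)) else \<infinity>)"

definition piw1 :: "(nat \<Rightarrow> 'x) \<Rightarrow> (nat \<Rightarrow> bool) \<Rightarrow> nat set \<Rightarrow> nat \<Rightarrow> real" where
  "piw1 x a J i = real (card (cls x J i \<inter> zeros a J))
      / ((real (card (zeros a J)))\<^sup>2 * real (card (cls x J i)))"

(* weight of the atom at min(\<bar>S_i, \<bar>S_j), for an ordered pair i \<noteq> j;
   same class: middle term (division by 0 gives 0 when N_k = 1); different classes: last term *)
definition piw2 :: "(nat \<Rightarrow> 'x) \<Rightarrow> (nat \<Rightarrow> bool) \<Rightarrow> nat set \<Rightarrow> nat \<Rightarrow> nat \<Rightarrow> real" where
  "piw2 x a J i j =
     (let N0 = real (card (zeros a J));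
          Nk = real (card (cls x J i)); Nk0 = real (card (cls x J i \<inter> zeros a J));
          Nl = real (card (cls x J j)); Nl0 = real (card (cls x J j \<inter> zeros a J))
      in if x i = x j then Nk0 * (Nk0 - 1) / (N0\<^sup>2 * Nk * (Nk - 1))
         else Nk0 * Nl0 / (N0\<^sup>2 * Nk * Nl))"

definition Pi_cdf :: "('x \<Rightarrow> 'y \<Rightarrow> real) \<Rightarrow> (nat \<Rightarrow> 'x) \<Rightarrow> (nat \<Rightarrow> bool) \<Rightarrow> (nat \<Rightarrow> 'y)
                      \<Rightarrow> nat set \<Rightarrow> ereal \<Rightarrow> real" where
  "Pi_cdf s x a y J t =
     (\<Sum>i\<in>J. piw1 x a J i * (if sbar s x a y i \<le> t then 1 else 0))
   + (\<Sum>i\<in>J. \<Sum>j\<in>J - {i}. piw2 x a J i j *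
        (if min (sbar s x a y i) (sbar s x a y j) \<le> t then 1 else 0))"

definition quant :: "(ereal \<Rightarrow> real) \<Rightarrow> real \<Rightarrow> ereal" where
  "quant F \<gamma> = Inf {t. F t \<ge> 1 - \<gamma>}"

definition C2 :: "('x \<Rightarrow> 'y \<Rightarrow> real) \<Rightarrow> (nat \<Rightarrow> 'x) \<Rightarrow> (nat \<Rightarrow> bool) \<Rightarrow> (nat \<Rightarrow> 'y)
                  \<Rightarrow> nat set \<Rightarrow> real \<Rightarrow> 'x \<Rightarrow> 'y set" where
  "C2 s x a y J \<beta> xv = {yv. ereal (s xv yv) \<le> quant (Pi_cdf s x a y J) (\<beta>\<^sup>2)}"

definition Ublk :: "nat \<Rightarrow> (nat \<Rightarrow> nat) \<Rightarrow> nat \<Rightarrow> nat set" where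
  "Ublk n lab l = {i \<in> {..<n}. lab i = l}"

definition Ubar :: "nat \<Rightarrow> (nat \<Rightarrow> bool) \<Rightarrow> (nat \<Rightarrow> nat) \<Rightarrow> nat \<Rightarrow> nat set" where
  "Ubar n a lab l = Ublk n lab l \<union> {i \<in> {..<n}. a i}"

definition alpha_l :: "nat \<Rightarrow> nat \<Rightarrow> (nat \<Rightarrow> bool) \<Rightarrow> (nat \<Rightarrow> nat) \<Rightarrow> real \<Rightarrow> nat \<Rightarrow> real" where
  "alpha_l n L a lab \<alpha> l =
     real (card (Ublk n lab l \<inter> zeros a {..<n})) * real (card (zeros a {..<n}))
     / (\<Sum>l'<L. (real (card (Ublk n lab l' \<inter> zeros a {..<n})))\<^sup>2) * \<alpha>"

definition CU :: "('x \<Rightarrow> 'y \<Rightarrow> real) \<Rightarrow> (nat \<Rightarrow> 'x) \<Rightarrow> (nat \<Rightarrow> bool) \<Rightarrow> (nat \<Rightarrow> 'y)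
                  \<Rightarrow> (nat \<Rightarrow> nat) \<Rightarrow> nat \<Rightarrow> nat \<Rightarrow> real \<Rightarrow> nat \<Rightarrow> 'y set" where
  "CU s x a y lab n L \<alpha> i =
     C2 s x a y (Ubar n a lab (lab i)) (alpha_l n L a lab \<alpha> (lab i)) (x i)"

definition miscov :: "('x \<Rightarrow> 'y \<Rightarrow> real) \<Rightarrow> (nat \<Rightarrow> 'x) \<Rightarrow> (nat \<Rightarrow> bool) \<Rightarrow> (nat \<Rightarrow> 'y)
                      \<Rightarrow> (nat \<Rightarrow> nat) \<Rightarrow> nat \<Rightarrow> nat \<Rightarrow> real \<Rightarrow> real" where
  "miscov s x a y lab n L \<alpha> =
     (if zeros a {..<n} = {} then 0 else
      (\<Sum>i\<in>zeros a {..<n}. if y i \<notin> CU s x a y lab n L \<alpha> i then 1 else 0)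
        / real (card (zeros a {..<n})))"

end

theory Submission
  imports Defs
begin

text \<open>Fix the labels. In one block, a missed outcome has a score above the quantile of \<open>\<Pi>\<close>,
  hence above the smaller oracle quantile \<open>q\<close> computed with all scores revealed, so the squared
  number of misses is at most the number of pairs \<open>(i, j)\<close> of unobserved indices with
  \<open>q < min S\<^sub>i S\<^sub>j\<close>. The oracle quantile is symmetric within feature classes, so by
  exchangeability the probability of this event depends on \<open>(i, j)\<close> only through the classes of
  \<open>i\<close> and \<open>j\<close>. The weights of \<open>\<Pi>\<close> average over exactly these classes, which turns the
  expected count into \<open>(N\<^sup>0)\<^sup>2\<close> times the \<open>\<Pi>\<close>-mass above its own
  \<open>(1 - \<beta>\<^sup>2)\<close>-quantile, at most \<open>\<beta>\<^sup>2\<close>. Cauchy-Schwarz over the blocks, with levels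
  \<open>\<alpha>\<^sub>l\<close> proportional to \<open>N\<^sub>l\<^sup>0\<close>, bounds the second moment by \<open>\<alpha>\<^sup>2\<close> for fixed
  labels, and independence of labels and outcomes averages this bound.\<close>

lemma sum_weighted_by_fibre_share:
  fixes \<tau> :: "'a \<Rightarrow> 'b" and g :: "'a \<Rightarrow> real"
  assumes fin: "finite B" and sub: "A \<subseteq> B"
    and const: "\<And>b b'. b \<in> B \<Longrightarrow> b' \<in> B \<Longrightarrow> \<tau> b = \<tau> b' \<Longrightarrow> g b = g b'"
  shows "(\<Sum>b\<in>B. real (card {a\<in>A. \<tau> a = \<tau> b}) / real (card {b'\<in>B. \<tau> b' = \<tau> b}) * g b)
         = (\<Sum>a\<in>A. g a)"
proof -
  have finA: "finite A" using fin sub finite_subset by blast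
  have fibre: "(\<Sum>b\<in>{b\<in>B. \<tau> b = t}. real (card {a\<in>A. \<tau> a = \<tau> b}) / real (card {b'\<in>B. \<tau> b' = \<tau> b}) * g b)
      = (\<Sum>a\<in>{a\<in>A. \<tau> a = t}. g a)" if "t \<in> \<tau> ` B" for t
  proof -
    obtain b0 where b0: "b0 \<in> B" "\<tau> b0 = t" using \<open>t \<in> \<tau> ` B\<close> by auto
    have ne: "card {b'\<in>B. \<tau> b' = t} > 0" using b0 fin by (auto simp: card_gt_0_iff)
    have g: "g b = g b0" if "b \<in> B" "\<tau> b = t" for b
      using const[OF that(1) b0(1)] that b0 by simp
    have "(\<Sum>b\<in>{b\<in>B. \<tau> b = t}. real (card {a\<in>A. \<tau> a = \<tau> b}) / real (card {b'\<in>B. \<tau> b' = \<tau> b}) * g b)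
        = (\<Sum>b\<in>{b\<in>B. \<tau> b = t}. real (card {a\<in>A. \<tau> a = t}) / real (card {b'\<in>B. \<tau> b' = t}) * g b0)"
      by (rule sum.cong[OF refl]) (simp add: g)
    also have "\<dots> = (\<Sum>a\<in>{a\<in>A. \<tau> a = t}. g b0)" using ne by simp
    also have "\<dots> = (\<Sum>a\<in>{a\<in>A. \<tau> a = t}. g a)"
      by (rule sum.cong[OF refl]) (use sub g in auto)
    finally show ?thesis .
  qed
  have "(\<Sum>b\<in>B. real (card {a\<in>A. \<tau> a = \<tau> b}) / real (card {b'\<in>B. \<tau> b' = \<tau> b}) * g b)
      = (\<Sum>t\<in>\<tau> ` B. \<Sum>b\<in>{b\<in>B. \<tau> b = t}. real (card {a\<in>A. \<tau> a = \<tau> b}) / real (card {b'\<in>B. \<tau> b' = \<tau> b}) * g b)"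
    by (rule sum.group[symmetric]) (use fin in auto)
  also have "\<dots> = (\<Sum>t\<in>\<tau> ` B. \<Sum>a\<in>{a\<in>A. \<tau> a = t}. g a)"
    by (rule sum.cong[OF refl fibre])
  also have "\<dots> = (\<Sum>a\<in>A. g a)"
    by (rule sum.group) (use fin finA sub in auto)
  finally show ?thesis .
qed

lemma sum_square_diagonal_split:
  fixes h :: "'a \<times> 'a \<Rightarrow> 'b::comm_monoid_add"
  assumes "finite J"
  shows "(\<Sum>p\<in>J \<times> J. h p) = (\<Sum>i\<in>J. h (i, i)) + (\<Sum>p\<in>Sigma J (\<lambda>i. J - {i}). h p)"
proof -
  have "(\<Sum>p\<in>J \<times> J. h p) = (\<Sum>i\<in>J. \<Sum>j\<in>J. h (i, j))"
    by (simp add: sum.cartesian_product)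
  also have "\<dots> = (\<Sum>i\<in>J. h (i, i) + (\<Sum>j\<in>J - {i}. h (i, j)))"
    by (rule sum.cong[OF refl]) (use assms in \<open>simp add: sum.remove\<close>)
  finally show ?thesis using assms by (simp add: sum.distrib sum.Sigma)
qed

lemma square_sum_indicator:
  "(\<Sum>i\<in>Z. if P i then 1 else 0 :: real)\<^sup>2 = (\<Sum>p\<in>Z \<times> Z. if P (fst p) \<and> P (snd p) then 1 else 0)"
  by (auto simp: power2_eq_square sum_product sum.cartesian_product intro!: sum.cong)

lemma card_off_diagonal:
  assumes "finite C"
  shows "real (card (Sigma C (\<lambda>k. C - {k}))) = real (card C) * (real (card C) - 1)"
proof -
  have "card (Sigma C (\<lambda>k. C - {k})) = (\<Sum>k\<in>C. card C - 1)"
    using assms by (simp add: card_SigmaI)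
  then show ?thesis by (cases "card C") (auto simp: algebra_simps)
qed

section \<open>Weighted distribution functions\<close>

definition wcdf :: "('k \<Rightarrow> real) \<Rightarrow> 'k set \<Rightarrow> ('k \<Rightarrow> ereal) \<Rightarrow> ereal \<Rightarrow> real" where
  "wcdf w K v t = (\<Sum>k\<in>K. w k * (if v k \<le> t then 1 else 0))"

lemma wcdf_le_wcdf:
  assumes "\<forall>k\<in>K. w k \<ge> 0" and "\<forall>k\<in>K. v k \<le> t \<longrightarrow> v' k \<le> t'"
  shows "wcdf w K v t \<le> wcdf w K v' t'"
  unfolding wcdf_def by (rule sum_mono) (use assms in auto)

lemma wcdf_Inf_attained:
  assumes fin: "finite K" and w: "\<forall>k\<in>K. w k \<ge> 0" and ne: "{t. wcdf w K v t \<ge> c} \<noteq> {}"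
  shows "wcdf w K v (Inf {t. wcdf w K v t \<ge> c}) \<ge> c"
proof -
  define S where "S = {t. wcdf w K v t \<ge> c}"
  define q where "q = Inf S"
  txt \<open>Only the finitely many atoms above \<open>q\<close> matter, and each of them is beaten by an
    element of \<open>S\<close>; the least of these elements shares the atoms below it with \<open>q\<close>.\<close>
  have "\<exists>ts\<in>S. \<forall>k\<in>K. v k \<le> ts \<longrightarrow> v k \<le> q"
  proof (cases "{k\<in>K. q < v k} = {}")
    case True
    from ne obtain t0 where "t0 \<in> S" unfolding S_def by auto
    then show ?thesis using True by (intro bexI[of _ t0]) (auto simp: not_less)
  next
    case False
    have "\<forall>k\<in>{k\<in>K. q < v k}. \<exists>t\<in>S. t < v k" unfolding q_def by (auto simp: Inf_less_iff)
    then obtain tk where tk: "\<And>k. k \<in> {k\<in>K. q < v k} \<Longrightarrow> tk k \<in> S \<and> tk k < v k" by metis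
    define ts where "ts = Min (tk ` {k\<in>K. q < v k})"
    have finB: "finite {k\<in>K. q < v k}" using fin by auto
    have "ts \<in> tk ` {k\<in>K. q < v k}" unfolding ts_def using False finB by (intro Min_in) auto
    then have "ts \<in> S" using tk by auto
    moreover have "v k \<le> q" if "k \<in> K" "v k \<le> ts" for k
    proof (rule ccontr)
      assume "\<not> v k \<le> q"
      then have kB: "k \<in> {k\<in>K. q < v k}" using that by auto
      have "ts \<le> tk k" unfolding ts_def using finB kB by (intro Min_le) auto
      with tk[OF kB] that show False by auto
    qed
    ultimately show ?thesis by blast
  qed
  then obtain ts where "ts \<in> S" "\<forall>k\<in>K. v k \<le> ts \<longrightarrow> v k \<le> q" by blast
  then have "c \<le> wcdf w K v ts" "wcdf w K v ts \<le> wcdf w K v q"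
    unfolding S_def using wcdf_le_wcdf[OF w] by auto
  then show ?thesis unfolding q_def S_def by linarith
qed

lemma Inf_wcdf_less_iff:
  assumes fin: "finite K" and w: "\<forall>k\<in>K. w k \<ge> 0" and m: "-\<infinity> < m"
  shows "Inf {t. wcdf w K v t \<ge> c} < m \<longleftrightarrow>
    wcdf w K v (-\<infinity>) \<ge> c \<or> (\<exists>k\<in>K. v k < m \<and> wcdf w K v (v k) \<ge> c)"
proof
  assume "Inf {t. wcdf w K v t \<ge> c} < m"
  then obtain t where t: "wcdf w K v t \<ge> c" "t < m" by (auto simp: Inf_less_iff)
  show "wcdf w K v (-\<infinity>) \<ge> c \<or> (\<exists>k\<in>K. v k < m \<and> wcdf w K v (v k) \<ge> c)"
  proof (cases "{k\<in>K. v k \<le> t} = {}")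
    case True
    have "wcdf w K v t \<le> wcdf w K v (-\<infinity>)"
      by (rule wcdf_le_wcdf[OF w]) (use True in auto)
    then show ?thesis using t by auto
  next
    case False
    have finB: "finite {k\<in>K. v k \<le> t}" using fin by auto
    have "Max (v ` {k\<in>K. v k \<le> t}) \<in> v ` {k\<in>K. v k \<le> t}" using False finB by (intro Max_in) auto
    then obtain k where k: "k \<in> K" "v k \<le> t" "v k = Max (v ` {k\<in>K. v k \<le> t})" by auto
    have "wcdf w K v t \<le> wcdf w K v (v k)"
      by (rule wcdf_le_wcdf[OF w]) (use finB k in auto)
    then show ?thesis using t k by (intro disjI2 bexI[of _ k]) auto
  qed
next
  assume "wcdf w K v (-\<infinity>) \<ge> c \<or> (\<exists>k\<in>K. v k < m \<and> wcdf w K v (v k) \<ge> c)"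
  then obtain t where "t < m" "wcdf w K v t \<ge> c"
    using m by (elim disjE bexE) auto
  then show "Inf {t. wcdf w K v t \<ge> c} < m" by (auto simp: Inf_less_iff)
qed

lemma wcdf_exceedance_le:
  assumes fin: "finite K" and w: "\<forall>k\<in>K. w k \<ge> 0" and total: "(\<Sum>k\<in>K. w k) = 1"
    and c: "0 \<le> c"
  shows "(\<Sum>k\<in>K. w k * (if Inf {t. wcdf w K v t \<ge> 1 - c} < v k then 1 else 0)) \<le> c"
proof -
  let ?q = "Inf {t. wcdf w K v t \<ge> 1 - c}"
  have "wcdf w K v \<infinity> = 1" using total by (simp add: wcdf_def)
  then have "\<infinity> \<in> {t. wcdf w K v t \<ge> 1 - c}" using c by simp
  then have "wcdf w K v ?q \<ge> 1 - c" using wcdf_Inf_attained[OF fin w] by blast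
  moreover have "(\<Sum>k\<in>K. w k * (if ?q < v k then 1 else 0)) = (\<Sum>k\<in>K. w k) - wcdf w K v ?q"
    unfolding wcdf_def sum_subtractf[symmetric] by (rule sum.cong) auto
  ultimately show ?thesis using total by simp
qed

lemma borel_measurable_wcdf:
  assumes "finite K"
    and "\<And>k. k \<in> K \<Longrightarrow> (\<lambda>\<omega>. v k \<omega>) \<in> borel_measurable M" and "f \<in> borel_measurable M"
  shows "(\<lambda>\<omega>. wcdf w K (\<lambda>k. v k \<omega>) (f \<omega>)) \<in> borel_measurable M"
  unfolding wcdf_def
proof (rule borel_measurable_sum)
  fix k assume "k \<in> K"
  note [measurable] = assms(2)[OF this] assms(3)
  show "(\<lambda>\<omega>. w k * (if v k \<omega> \<le> f \<omega> then 1 else 0)) \<in> borel_measurable M"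
    by measurable
qed

lemma sets_Inf_wcdf_less:
  assumes fin: "finite K" and w: "\<forall>k\<in>K. w k \<ge> 0"
    and v: "\<And>k. k \<in> K \<Longrightarrow> (\<lambda>\<omega>. v k \<omega>) \<in> borel_measurable M"
    and m: "m \<in> borel_measurable M" and m_gt: "\<And>\<omega>. -\<infinity> < m \<omega>"
  shows "{\<omega> \<in> space M. Inf {t. wcdf w K (\<lambda>k. v k \<omega>) t \<ge> c} < m \<omega>} \<in> sets M"
proof -
  have "{\<omega> \<in> space M. Inf {t. wcdf w K (\<lambda>k. v k \<omega>) t \<ge> c} < m \<omega>}
    = {\<omega> \<in> space M. wcdf w K (\<lambda>k. v k \<omega>) (-\<infinity>) \<ge> c} \<union>
      (\<Union>k\<in>K. {\<omega> \<in> space M. v k \<omega> < m \<omega> \<and> wcdf w K (\<lambda>k. v k \<omega>) (v k \<omega>) \<ge> c})"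
    using Inf_wcdf_less_iff[OF fin w m_gt] by blast
  also have "\<dots> \<in> sets M"
  proof (intro sets.Un sets.finite_UN[OF fin] ballI)
    have "(\<lambda>\<omega>. wcdf w K (\<lambda>k. v k \<omega>) (-\<infinity>)) \<in> borel_measurable M"
      by (rule borel_measurable_wcdf[OF fin v]) auto
    then show "{\<omega> \<in> space M. wcdf w K (\<lambda>k. v k \<omega>) (-\<infinity>) \<ge> c} \<in> sets M" by measurable
    fix k assume k: "k \<in> K"
    note [measurable] = borel_measurable_wcdf[OF fin v v[OF k]] v[OF k] m
    show "{\<omega> \<in> space M. v k \<omega> < m \<omega> \<and> wcdf w K (\<lambda>k. v k \<omega>) (v k \<omega>) \<ge> c} \<in> sets M"
      by measurable
  qed
  finally show ?thesis .
qed

section \<open>The distribution \<open>\<Pi>\<close> as weights on pairs\<close>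

definition pair_weight :: "(nat \<Rightarrow> 'x) \<Rightarrow> (nat \<Rightarrow> bool) \<Rightarrow> nat set \<Rightarrow> nat \<times> nat \<Rightarrow> real" where
  "pair_weight x a J p =
     (if fst p = snd p then piw1 x a J (fst p) else piw2 x a J (fst p) (snd p))"

definition pair_min :: "('i \<Rightarrow> ereal) \<Rightarrow> 'i \<times> 'i \<Rightarrow> ereal" where
  "pair_min v p = min (v (fst p)) (v (snd p))"

lemma Pi_cdf_eq_wcdf:
  assumes fin: "finite J"
  shows "Pi_cdf s x a y J = wcdf (pair_weight x a J) (J \<times> J) (pair_min (sbar s x a y))"
proof
  fix t
  let ?ind = "\<lambda>p. if pair_min (sbar s x a y) p \<le> t then 1 else 0 :: real"
  have "(\<Sum>i\<in>J. \<Sum>j\<in>J - {i}. piw2 x a J i j * ?ind (i, j))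
      = (\<Sum>p\<in>Sigma J (\<lambda>i. J - {i}). pair_weight x a J p * ?ind p)"
    using fin by (subst sum.Sigma) (auto simp: pair_weight_def split: if_splits intro!: sum.cong)
  then show "Pi_cdf s x a y J t = wcdf (pair_weight x a J) (J \<times> J) (pair_min (sbar s x a y)) t"
    unfolding wcdf_def Pi_cdf_def sum_square_diagonal_split[OF fin]
    by (simp add: pair_weight_def pair_min_def)
qed

lemma pair_weight_nonneg: "pair_weight x a J p \<ge> 0"
proof -
  have "0 \<le> real c * (real c - 1)" for c by (cases c) auto
  then show ?thesis
    unfolding pair_weight_def piw1_def piw2_def Let_def
    by (auto intro!: divide_nonneg_nonneg mult_nonneg_nonneg simp: mult.assoc)
qed

lemma cls_Int_zeros: "cls x J i \<inter> zeros a J = {k \<in> zeros a J. x k = x i}"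
  unfolding cls_def zeros_def by auto

lemma sum_piw1_class_invariant:
  fixes g :: "nat \<Rightarrow> real"
  assumes fin: "finite J"
    and g: "\<And>i i'. i \<in> J \<Longrightarrow> i' \<in> J \<Longrightarrow> x i = x i' \<Longrightarrow> g i = g i'"
  shows "(\<Sum>i\<in>J. piw1 x a J i * g i) = (\<Sum>i\<in>zeros a J. g i) / (real (card (zeros a J)))\<^sup>2"
proof -
  have "(\<Sum>i\<in>J. piw1 x a J i * g i)
      = (\<Sum>i\<in>J. real (card {k\<in>zeros a J. x k = x i}) / real (card {k\<in>J. x k = x i}) * g i)
        / (real (card (zeros a J)))\<^sup>2"
    unfolding piw1_def sum_divide_distrib cls_Int_zeros by (simp add: cls_def mult_ac)
  also have "\<dots> = (\<Sum>i\<in>zeros a J. g i) / (real (card (zeros a J)))\<^sup>2"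
  proof -
    have "zeros a J \<subseteq> J" by (auto simp: zeros_def)
    from sum_weighted_by_fibre_share[of J "zeros a J" x g, OF fin this g] show ?thesis by (simp only:)
  qed
  finally show ?thesis .
qed

lemma piw2_eq_fibre_share:
  fixes x :: "nat \<Rightarrow> 'x" and a :: "nat \<Rightarrow> bool"
  assumes fin: "finite J" and ij: "(i, j) \<in> Sigma J (\<lambda>i. J - {i})"
  defines "OJ \<equiv> Sigma J (\<lambda>i. J - {i})" and "OZ \<equiv> Sigma (zeros a J) (\<lambda>i. zeros a J - {i})"
  shows "piw2 x a J i j = real (card {q\<in>OZ. map_prod x x q = (x i, x j)})
    / real (card {q\<in>OJ. map_prod x x q = (x i, x j)}) / (real (card (zeros a J)))\<^sup>2"
proof (cases "x i = x j")
  case True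
  have fin_cls: "finite (cls x J i)" "finite (cls x J i \<inter> zeros a J)"
    unfolding cls_def using fin by auto
  have fibres: "{q\<in>OJ. map_prod x x q = (x i, x j)} = Sigma (cls x J i) (\<lambda>k. cls x J i - {k})"
    "{q\<in>OZ. map_prod x x q = (x i, x j)}
      = Sigma (cls x J i \<inter> zeros a J) (\<lambda>k. cls x J i \<inter> zeros a J - {k})"
    unfolding OJ_def OZ_def cls_Int_zeros using True by (auto simp: cls_def)
  show ?thesis
    unfolding fibres piw2_def Let_def card_off_diagonal[OF fin_cls(1)] card_off_diagonal[OF fin_cls(2)]
    using True by (simp add: divide_divide_eq_left mult_ac)
next
  case False
  have "{q\<in>OJ. map_prod x x q = (x i, x j)} = cls x J i \<times> cls x J j"
    "{q\<in>OZ. map_prod x x q = (x i, x j)} = (cls x J i \<inter> zeros a J) \<times> (cls x J j \<inter> zeros a J)"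
    unfolding OJ_def OZ_def cls_Int_zeros using False by (auto simp: cls_def)
  then show ?thesis
    unfolding piw2_def Let_def using False
    by (simp add: card_cartesian_product divide_divide_eq_left mult_ac)
qed

lemma sum_piw2_class_invariant:
  fixes g :: "nat \<times> nat \<Rightarrow> real"
  assumes fin: "finite J"
    and g: "\<And>p p'. p \<in> Sigma J (\<lambda>i. J - {i}) \<Longrightarrow> p' \<in> Sigma J (\<lambda>i. J - {i})
      \<Longrightarrow> map_prod x x p = map_prod x x p' \<Longrightarrow> g p = g p'"
  shows "(\<Sum>p\<in>Sigma J (\<lambda>i. J - {i}). piw2 x a J (fst p) (snd p) * g p)
    = (\<Sum>p\<in>Sigma (zeros a J) (\<lambda>i. zeros a J - {i}). g p) / (real (card (zeros a J)))\<^sup>2"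
proof -
  let ?OJ = "Sigma J (\<lambda>i. J - {i})" and ?OZ = "Sigma (zeros a J) (\<lambda>i. zeros a J - {i})"
  have "(\<Sum>p\<in>?OJ. piw2 x a J (fst p) (snd p) * g p)
      = (\<Sum>p\<in>?OJ. real (card {q\<in>?OZ. map_prod x x q = map_prod x x p})
          / real (card {q\<in>?OJ. map_prod x x q = map_prod x x p}) * g p) / (real (card (zeros a J)))\<^sup>2"
    unfolding sum_divide_distrib
    by (rule sum.cong[OF refl]) (auto simp: piw2_eq_fibre_share[OF fin])
  also have "\<dots> = (\<Sum>p\<in>?OZ. g p) / (real (card (zeros a J)))\<^sup>2"
  proof -
    have "finite ?OJ" "?OZ \<subseteq> ?OJ" using fin by (auto simp: zeros_def)
    from sum_weighted_by_fibre_share[of ?OJ ?OZ "map_prod x x" g, OF this g] show ?thesis by (simp only:)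
  qed
  finally show ?thesis .
qed

lemma sum_pair_weight_class_invariant:
  fixes h :: "nat \<times> nat \<Rightarrow> real"
  assumes fin: "finite J"
    and diag: "\<And>i i'. i \<in> J \<Longrightarrow> i' \<in> J \<Longrightarrow> x i = x i' \<Longrightarrow> h (i, i) = h (i', i')"
    and off_diag: "\<And>p p'. p \<in> Sigma J (\<lambda>i. J - {i}) \<Longrightarrow> p' \<in> Sigma J (\<lambda>i. J - {i})
      \<Longrightarrow> map_prod x x p = map_prod x x p' \<Longrightarrow> h p = h p'"
  shows "(\<Sum>p\<in>J \<times> J. pair_weight x a J p * h p)
    = (\<Sum>p\<in>zeros a J \<times> zeros a J. h p) / (real (card (zeros a J)))\<^sup>2"
proof -
  have finZ: "finite (zeros a J)" using fin by (simp add: zeros_def)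
  have on_diag: "(\<Sum>i\<in>J. piw1 x a J i * h (i, i)) = (\<Sum>i\<in>zeros a J. h (i, i)) / (real (card (zeros a J)))\<^sup>2"
    by (rule sum_piw1_class_invariant[OF fin diag])
  have off: "(\<Sum>p\<in>Sigma J (\<lambda>i. J - {i}). piw2 x a J (fst p) (snd p) * h p)
      = (\<Sum>p\<in>Sigma (zeros a J) (\<lambda>i. zeros a J - {i}). h p) / (real (card (zeros a J)))\<^sup>2"
    by (rule sum_piw2_class_invariant[OF fin off_diag])
  have "(\<Sum>p\<in>J \<times> J. pair_weight x a J p * h p)
      = (\<Sum>i\<in>J. piw1 x a J i * h (i, i))
        + (\<Sum>p\<in>Sigma J (\<lambda>i. J - {i}). piw2 x a J (fst p) (snd p) * h p)"
    unfolding sum_square_diagonal_split[OF fin] by (auto simp: pair_weight_def split: if_splits intro!: sum.cong)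
  also have "\<dots> = (\<Sum>p\<in>zeros a J \<times> zeros a J. h p) / (real (card (zeros a J)))\<^sup>2"
    unfolding on_diag off sum_square_diagonal_split[OF finZ] by (simp add: add_divide_distrib)
  finally show ?thesis .
qed

lemma sum_pair_weight:
  assumes "finite J" and "zeros a J \<noteq> {}"
  shows "(\<Sum>p\<in>J \<times> J. pair_weight x a J p) = 1"
proof -
  have "finite (zeros a J)" using assms(1) by (simp add: zeros_def)
  then show ?thesis
    using sum_pair_weight_class_invariant[OF assms(1), of x "\<lambda>_. 1" a] assms(2)
    by (simp add: card_cartesian_product power2_eq_square)
qed

lemma pair_weight_permute:
  assumes bij: "bij_betw \<sigma> J J" and x_\<sigma>: "\<forall>i\<in>J. x (\<sigma> i) = x i" and p: "p \<in> J \<times> J"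
  shows "pair_weight x a J (map_prod \<sigma> \<sigma> p) = pair_weight x a J p"
proof -
  obtain i j where ij: "p = (i, j)" "i \<in> J" "j \<in> J" using p by auto
  have "\<sigma> i = \<sigma> j \<longleftrightarrow> i = j" using bij ij by (auto simp: bij_betw_def inj_on_def)
  moreover have "cls x J (\<sigma> i) = cls x J i" "cls x J (\<sigma> j) = cls x J j"
    using x_\<sigma> ij by (simp_all add: cls_def)
  ultimately show ?thesis
    unfolding ij pair_weight_def piw1_def piw2_def Let_def using x_\<sigma> ij by simp
qed

lemma wcdf_pair_weight_permute:
  assumes bij: "bij_betw \<sigma> J J" and x_\<sigma>: "\<forall>i\<in>J. x (\<sigma> i) = x i"
  shows "wcdf (pair_weight x a J) (J \<times> J) (v \<circ> map_prod \<sigma> \<sigma>) = wcdf (pair_weight x a J) (J \<times> J) v"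
proof
  fix t
  have "wcdf (pair_weight x a J) (J \<times> J) (v \<circ> map_prod \<sigma> \<sigma>) t
      = (\<Sum>p\<in>J \<times> J. pair_weight x a J (map_prod \<sigma> \<sigma> p) * (if v (map_prod \<sigma> \<sigma> p) \<le> t then 1 else 0))"
    unfolding wcdf_def by (rule sum.cong[OF refl]) (simp add: pair_weight_permute[OF bij x_\<sigma>])
  also have "\<dots> = wcdf (pair_weight x a J) (J \<times> J) v t"
    unfolding wcdf_def by (rule sum.reindex_bij_betw[OF bij_betw_map_prod[OF bij bij]])
  finally show "wcdf (pair_weight x a J) (J \<times> J) (v \<circ> map_prod \<sigma> \<sigma>) t = wcdf (pair_weight x a J) (J \<times> J) v t" .
qed

lemma sum_pair_weight_transpose_invariant:
  fixes h :: "nat \<times> nat \<Rightarrow> real"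
  assumes fin: "finite J"
    and inv: "\<And>u v i j. u \<in> J \<Longrightarrow> v \<in> J \<Longrightarrow> x u = x v \<Longrightarrow> i \<in> J \<Longrightarrow> j \<in> J
      \<Longrightarrow> h (Transposition.transpose u v i, Transposition.transpose u v j) = h (i, j)"
  shows "(\<Sum>p\<in>J \<times> J. pair_weight x a J p * h p)
    = (\<Sum>p\<in>zeros a J \<times> zeros a J. h p) / (real (card (zeros a J)))\<^sup>2"
proof (rule sum_pair_weight_class_invariant[OF fin])
  fix i i' assume "i \<in> J" "i' \<in> J" "x i = x i'"
  then show "h (i, i) = h (i', i')" using inv[of i i' i i] by simp
next
  fix p p' assume p: "p \<in> Sigma J (\<lambda>i. J - {i})" and p': "p' \<in> Sigma J (\<lambda>i. J - {i})"
    and x_p: "map_prod x x p = map_prod x x p'"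
  obtain i j i' j' where ij: "p = (i, j)" "p' = (i', j')" by (cases p, cases p')
  txt \<open>Move \<open>i\<close> to \<open>i'\<close> first; then move the image of \<open>j\<close> to \<open>j'\<close>, which fixes \<open>i'\<close>.\<close>
  define k where "k = Transposition.transpose i i' j"
  have k: "k \<in> J" "x k = x j'" "k \<noteq> i'"
    using p p' x_p unfolding ij k_def by (auto simp: Transposition.transpose_def)
  have "h (i, j) = h (i', k)"
    using inv[of i i' i j] p p' x_p unfolding ij k_def by simp
  also have "\<dots> = h (i', j')"
    using inv[of k j' i' k] k p' unfolding ij by auto
  finally show "h p = h p'" unfolding ij .
qed

section \<open>The oracle quantile\<close>

definition score :: "('x \<Rightarrow> 'y \<Rightarrow> real) \<Rightarrow> (nat \<Rightarrow> 'x) \<Rightarrow> (nat \<Rightarrow> 'y) \<Rightarrow> nat \<Rightarrow> ereal" where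
  "score s x y i = ereal (s (x i) (y i))"

definition oracle_quantile :: "('x \<Rightarrow> 'y \<Rightarrow> real) \<Rightarrow> (nat \<Rightarrow> 'x) \<Rightarrow> (nat \<Rightarrow> bool) \<Rightarrow> nat set
    \<Rightarrow> real \<Rightarrow> (nat \<Rightarrow> 'y) \<Rightarrow> ereal" where
  "oracle_quantile s x a J \<beta> y =
     Inf {t. wcdf (pair_weight x a J) (J \<times> J) (pair_min (score s x y)) t \<ge> 1 - \<beta>\<^sup>2}"

lemma notin_C2_iff: "yv \<notin> C2 s x a y J \<beta> xv \<longleftrightarrow> quant (Pi_cdf s x a y J) (\<beta>\<^sup>2) < ereal (s xv yv)"
  by (simp add: C2_def not_le)

lemma oracle_quantile_le_quant:
  assumes "finite J"
  shows "oracle_quantile s x a J \<beta> y \<le> quant (Pi_cdf s x a y J) (\<beta>\<^sup>2)"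
proof -
  have "wcdf (pair_weight x a J) (J \<times> J) (pair_min (sbar s x a y)) t
      \<le> wcdf (pair_weight x a J) (J \<times> J) (pair_min (score s x y)) t" for t
  proof (rule wcdf_le_wcdf)
    have "pair_min (score s x y) p \<le> pair_min (sbar s x a y) p" for p
      unfolding pair_min_def by (intro min.mono) (simp_all add: score_def sbar_def)
    then show "\<forall>p\<in>J \<times> J. pair_min (sbar s x a y) p \<le> t \<longrightarrow> pair_min (score s x y) p \<le> t"
      by (blast intro: order_trans)
  qed (simp add: pair_weight_nonneg)
  then show ?thesis
    unfolding oracle_quantile_def quant_def Pi_cdf_eq_wcdf[OF assms]
    by (intro Inf_superset_mono) (auto intro: order_trans)
qed

lemma miss_count_square_le:
  assumes "finite J"
  shows "(\<Sum>i\<in>zeros a J. if y i \<notin> C2 s x a y J \<beta> (x i) then 1 else 0 :: real)\<^sup>2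
    \<le> (\<Sum>p\<in>zeros a J \<times> zeros a J.
          if oracle_quantile s x a J \<beta> y < pair_min (score s x y) p then 1 else 0)"
proof -
  let ?q = "oracle_quantile s x a J \<beta> y"
  have "(\<Sum>i\<in>zeros a J. if y i \<notin> C2 s x a y J \<beta> (x i) then 1 else 0 :: real)
      \<le> (\<Sum>i\<in>zeros a J. if ?q < score s x y i then 1 else 0)"
    using oracle_quantile_le_quant[OF assms, of s x a \<beta> y]
    by (intro sum_mono) (auto simp: notin_C2_iff score_def dest: le_less_trans)
  then have "(\<Sum>i\<in>zeros a J. if y i \<notin> C2 s x a y J \<beta> (x i) then 1 else 0 :: real)\<^sup>2
      \<le> (\<Sum>i\<in>zeros a J. if ?q < score s x y i then 1 else 0)\<^sup>2"
    by (rule power_mono) (simp add: sum_nonneg)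
  also have "\<dots> = (\<Sum>p\<in>zeros a J \<times> zeros a J. if ?q < pair_min (score s x y) p then 1 else 0)"
    unfolding square_sum_indicator by (simp add: pair_min_def)
  finally show ?thesis .
qed

lemma oracle_exceedance_le:
  assumes "finite J" and "zeros a J \<noteq> {}"
  shows "(\<Sum>p\<in>J \<times> J. pair_weight x a J p
      * (if oracle_quantile s x a J \<beta> y < pair_min (score s x y) p then 1 else 0)) \<le> \<beta>\<^sup>2"
  unfolding oracle_quantile_def
  using assms by (intro wcdf_exceedance_le) (auto simp: pair_weight_nonneg sum_pair_weight)

lemma oracle_quantile_permute:
  assumes bij: "bij_betw \<sigma> J J" and x_\<sigma>: "\<forall>i\<in>J. x (\<sigma> i) = x i" and y': "\<forall>i\<in>J. y' i = y (\<sigma> i)"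
  shows "oracle_quantile s x a J \<beta> y' = oracle_quantile s x a J \<beta> y"
proof -
  have "wcdf (pair_weight x a J) (J \<times> J) (pair_min (score s x y'))
      = wcdf (pair_weight x a J) (J \<times> J) (pair_min (score s x y) \<circ> map_prod \<sigma> \<sigma>)"
    using x_\<sigma> y' by (intro ext) (auto simp: wcdf_def pair_min_def score_def intro!: sum.cong)
  then show ?thesis
    unfolding oracle_quantile_def wcdf_pair_weight_permute[OF bij x_\<sigma>] by simp
qed

section \<open>Misses in one block\<close>

definition class_exchangeable :: "(nat \<Rightarrow> 'y) measure \<Rightarrow> 'y measure \<Rightarrow> nat \<Rightarrow> (nat \<Rightarrow> 'x) \<Rightarrow> bool" where
  "class_exchangeable P Ysp n x \<longleftrightarrow>
     (\<forall>\<sigma>. bij_betw \<sigma> {..<n} {..<n} \<and> (\<forall>i<n. x (\<sigma> i) = x i) \<longrightarrow>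
        distr P (PiM {..<n} (\<lambda>_. Ysp)) (\<lambda>y. restrict (\<lambda>i. y (\<sigma> i)) {..<n}) = P)"

lemma class_exchangeable_distr:
  assumes Y: "(\<lambda>\<omega>. restrict (Y \<omega>) {..<n}) \<in> measurable M (PiM {..<n} (\<lambda>_. Ysp))"
    and exch: "\<forall>\<sigma>. bij_betw \<sigma> {..<n} {..<n} \<and> (\<forall>i<n. x (\<sigma> i) = x i) \<longrightarrow>
        distr M (PiM {..<n} (\<lambda>_. Ysp)) (\<lambda>\<omega>. restrict (\<lambda>i. Y \<omega> (\<sigma> i)) {..<n})
      = distr M (PiM {..<n} (\<lambda>_. Ysp)) (\<lambda>\<omega>. restrict (Y \<omega>) {..<n})"
  shows "class_exchangeable (distr M (PiM {..<n} (\<lambda>_. Ysp)) (\<lambda>\<omega>. restrict (Y \<omega>) {..<n})) Ysp n x"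
  unfolding class_exchangeable_def
proof (intro allI impI, elim conjE)
  let ?PI = "PiM {..<n} (\<lambda>_. Ysp)"
  fix \<sigma> assume \<sigma>: "bij_betw \<sigma> {..<n} {..<n}" and x_\<sigma>: "\<forall>i<n. x (\<sigma> i) = x i"
  have \<sigma>_n: "\<sigma> i \<in> {..<n}" if "i \<in> {..<n}" for i using \<sigma> that by (auto simp: bij_betw_def)
  have R: "(\<lambda>y. restrict (\<lambda>i. y (\<sigma> i)) {..<n}) \<in> measurable ?PI ?PI"
    by (rule measurable_restrict) (rule measurable_component_singleton[OF \<sigma>_n])
  have "(\<lambda>y. restrict (\<lambda>i. y (\<sigma> i)) {..<n}) \<circ> (\<lambda>\<omega>. restrict (Y \<omega>) {..<n})
      = (\<lambda>\<omega>. restrict (\<lambda>i. Y \<omega> (\<sigma> i)) {..<n})"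
    using \<sigma>_n by (auto simp: fun_eq_iff)
  then show "distr (distr M ?PI (\<lambda>\<omega>. restrict (Y \<omega>) {..<n})) ?PI (\<lambda>y. restrict (\<lambda>i. y (\<sigma> i)) {..<n})
      = distr M ?PI (\<lambda>\<omega>. restrict (Y \<omega>) {..<n})"
    using distr_distr[OF R Y] exch \<sigma> x_\<sigma> by simp
qed

lemma borel_measurable_score:
  assumes s_meas: "\<forall>xv. (\<lambda>yv. s xv yv) \<in> borel_measurable Ysp" and i: "i < n"
  shows "(\<lambda>y. score s x y i) \<in> borel_measurable (PiM {..<n} (\<lambda>_. Ysp))"
proof -
  have "(\<lambda>y. y i) \<in> measurable (PiM {..<n} (\<lambda>_. Ysp)) Ysp"
    using i by (intro measurable_component_singleton) simp
  then have "(\<lambda>y. s (x i) (y i)) \<in> borel_measurable (PiM {..<n} (\<lambda>_. Ysp))"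
    using s_meas measurable_compose by blast
  then show ?thesis unfolding score_def by measurable
qed

lemma borel_measurable_sbar:
  assumes "\<forall>xv. (\<lambda>yv. s xv yv) \<in> borel_measurable Ysp" and "i < n"
  shows "(\<lambda>y. sbar s x a y i) \<in> borel_measurable (PiM {..<n} (\<lambda>_. Ysp))"
proof -
  have "(\<lambda>y. sbar s x a y i) = (\<lambda>y. if a i then score s x y i else \<infinity>)"
    unfolding sbar_def score_def ..
  then show ?thesis using borel_measurable_score[OF assms] by simp
qed

lemma borel_measurable_pair_min:
  assumes "\<And>i. i \<in> J \<Longrightarrow> (\<lambda>\<omega>. v \<omega> i) \<in> borel_measurable M" and "p \<in> J \<times> J"
  shows "(\<lambda>\<omega>. pair_min (v \<omega>) p) \<in> borel_measurable M"
  using assms unfolding pair_min_def by (cases p) (auto intro!: borel_measurable_min)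

lemma sets_oracle_exceedance:
  assumes s_meas: "\<forall>xv. (\<lambda>yv. s xv yv) \<in> borel_measurable Ysp"
    and J: "J \<subseteq> {..<n}" and p: "p \<in> J \<times> J"
  shows "{y \<in> space (PiM {..<n} (\<lambda>_. Ysp)). oracle_quantile s x a J \<beta> y < pair_min (score s x y) p}
    \<in> sets (PiM {..<n} (\<lambda>_. Ysp))"
proof -
  have fin: "finite J" using J finite_subset by blast
  have score: "\<And>i. i \<in> J \<Longrightarrow> (\<lambda>y. score s x y i) \<in> borel_measurable (PiM {..<n} (\<lambda>_. Ysp))"
    using borel_measurable_score[OF s_meas] J by blast
  show ?thesis
    unfolding oracle_quantile_def
  proof (rule sets_Inf_wcdf_less[OF _ _ borel_measurable_pair_min borel_measurable_pair_min])
    show "-\<infinity> < pair_min (score s x y) p" for y by (simp add: pair_min_def score_def)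
  qed (use fin p score pair_weight_nonneg in auto)
qed

lemma borel_measurable_miss:
  assumes s_meas: "\<forall>xv. (\<lambda>yv. s xv yv) \<in> borel_measurable Ysp"
    and J: "J \<subseteq> {..<n}" and i: "i \<in> J"
  shows "(\<lambda>y. if y i \<notin> C2 s x a y J \<beta> (x i) then 1 else 0 :: real)
    \<in> borel_measurable (PiM {..<n} (\<lambda>_. Ysp))"
proof (rule measurable_If)
  have fin: "finite J" using J finite_subset by blast
  have "{y \<in> space (PiM {..<n} (\<lambda>_. Ysp)).
      Inf {t. wcdf (pair_weight x a J) (J \<times> J) (pair_min (sbar s x a y)) t \<ge> 1 - \<beta>\<^sup>2}
        < score s x y i} \<in> sets (PiM {..<n} (\<lambda>_. Ysp))"
  proof (rule sets_Inf_wcdf_less[OF _ _ borel_measurable_pair_min])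
    show "-\<infinity> < score s x y i" for y by (simp add: score_def)
  qed (use fin J i pair_weight_nonneg borel_measurable_sbar[OF s_meas]
         borel_measurable_score[OF s_meas] in auto)
  then show "{y \<in> space (PiM {..<n} (\<lambda>_. Ysp)). y i \<notin> C2 s x a y J \<beta> (x i)}
      \<in> sets (PiM {..<n} (\<lambda>_. Ysp))"
    by (simp add: notin_C2_iff quant_def Pi_cdf_eq_wcdf[OF fin] score_def)
qed auto

lemma measure_oracle_exceedance_transpose:
  fixes P :: "(nat \<Rightarrow> 'y) measure" and a :: "nat \<Rightarrow> bool" and \<beta> :: real
  assumes sets_P: "sets P = sets (PiM {..<n} (\<lambda>_. Ysp))"
    and s_meas: "\<forall>xv. (\<lambda>yv. s xv yv) \<in> borel_measurable Ysp"
    and exch: "class_exchangeable P Ysp n x"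
    and J: "J \<subseteq> {..<n}" and uv: "u \<in> J" "v \<in> J" "x u = x v" and p: "p \<in> J \<times> J"
  defines "\<tau> \<equiv> Transposition.transpose u v"
    and "E \<equiv> \<lambda>p. {y \<in> space P. oracle_quantile s x a J \<beta> y < pair_min (score s x y) p}"
  shows "measure P (E (map_prod \<tau> \<tau> p)) = measure P (E p)"
proof -
  let ?PI = "PiM {..<n} (\<lambda>_. Ysp)"
  define R where "R y = restrict (\<lambda>i. y (\<tau> i)) {..<n}" for y :: "nat \<Rightarrow> 'y"
  have \<tau>_n: "\<tau> i \<in> {..<n}" if "i \<in> {..<n}" for i
    using that uv J by (auto simp: \<tau>_def Transposition.transpose_def)
  have x_\<tau>: "x (\<tau> i) = x i" for i using uv by (auto simp: \<tau>_def Transposition.transpose_def)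
  have space_P: "space P = space ?PI" using sets_P by (rule sets_eq_imp_space_eq)
  have R_meas: "R \<in> measurable P ?PI"
    unfolding R_def measurable_cong_sets[OF sets_P refl]
    by (rule measurable_restrict) (rule measurable_component_singleton[OF \<tau>_n])
  have "bij_betw \<tau> {..<n} {..<n}" unfolding \<tau>_def using uv J by (intro bij_betw_transpose_iff) auto
  then have distr_R: "distr P ?PI R = P"
    using exch x_\<tau> unfolding class_exchangeable_def R_def by blast
  have quantile_R: "oracle_quantile s x a J \<beta> (R y) = oracle_quantile s x a J \<beta> y" for y
    using uv J x_\<tau> by (intro oracle_quantile_permute[where \<sigma>=\<tau>]) (auto simp: \<tau>_def R_def)
  have pair_min_R: "pair_min (score s x (R y)) p = pair_min (score s x y) (map_prod \<tau> \<tau> p)" for y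
    using p J x_\<tau> by (auto simp: pair_min_def score_def R_def)
  have "R -` E p \<inter> space P = E (map_prod \<tau> \<tau> p)"
    using measurable_space[OF R_meas] space_P by (auto simp: E_def quantile_R pair_min_R)
  moreover have "E p \<in> sets ?PI"
    using sets_oracle_exceedance[OF s_meas J p] space_P by (simp add: E_def)
  ultimately show ?thesis
    using measure_distr[OF R_meas] distr_R by metis
qed

lemma sum_measure_oracle_exceedance:
  fixes P :: "(nat \<Rightarrow> 'y) measure" and a :: "nat \<Rightarrow> bool" and \<beta> :: real
  assumes sets_P: "sets P = sets (PiM {..<n} (\<lambda>_. Ysp))"
    and s_meas: "\<forall>xv. (\<lambda>yv. s xv yv) \<in> borel_measurable Ysp"
    and exch: "class_exchangeable P Ysp n x"
    and J: "J \<subseteq> {..<n}" and Z: "zeros a J \<noteq> {}"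
  defines "E \<equiv> \<lambda>p. {y \<in> space P. oracle_quantile s x a J \<beta> y < pair_min (score s x y) p}"
  shows "(\<Sum>p\<in>zeros a J \<times> zeros a J. measure P (E p))
    = (real (card (zeros a J)))\<^sup>2 * (\<Sum>p\<in>J \<times> J. pair_weight x a J p * measure P (E p))"
proof -
  have fin: "finite J" using J finite_subset by blast
  have "measure P (E (Transposition.transpose u v i, Transposition.transpose u v j)) = measure P (E (i, j))"
    if "u \<in> J" "v \<in> J" "x u = x v" "i \<in> J" "j \<in> J" for u v i j
    using measure_oracle_exceedance_transpose[OF sets_P s_meas exch J that(1-3), of "(i, j)" a \<beta>] that
    by (simp add: E_def)
  from sum_pair_weight_transpose_invariant[OF fin this]
  have "(\<Sum>p\<in>J \<times> J. pair_weight x a J p * measure P (E p))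
      = (\<Sum>p\<in>zeros a J \<times> zeros a J. measure P (E p)) / (real (card (zeros a J)))\<^sup>2" .
  moreover have "card (zeros a J) > 0" using Z fin by (simp add: zeros_def card_gt_0_iff)
  ultimately show ?thesis by simp
qed

lemma block_second_moment_le:
  fixes P :: "(nat \<Rightarrow> 'y) measure"
  assumes P: "prob_space P" and sets_P: "sets P = sets (PiM {..<n} (\<lambda>_. Ysp))"
    and s_meas: "\<forall>xv. (\<lambda>yv. s xv yv) \<in> borel_measurable Ysp"
    and exch: "class_exchangeable P Ysp n x"
    and J: "J \<subseteq> {..<n}" and Z: "zeros a J \<noteq> {}"
  shows "(\<integral>y. (\<Sum>i\<in>zeros a J. if y i \<notin> C2 s x a y J \<beta> (x i) then 1 else 0)\<^sup>2 \<partial>P)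
    \<le> (real (card (zeros a J)))\<^sup>2 * \<beta>\<^sup>2"
proof -
  interpret prob_space P by (rule P)
  define E where "E p = {y \<in> space P. oracle_quantile s x a J \<beta> y < pair_min (score s x y) p}" for p
  have fin: "finite J" using J finite_subset by blast
  have ZJ: "zeros a J \<times> zeros a J \<subseteq> J \<times> J" by (auto simp: zeros_def)
  have space_P: "space P = space (PiM {..<n} (\<lambda>_. Ysp))" using sets_P by (rule sets_eq_imp_space_eq)
  have E_sets: "E p \<in> sets P" if "p \<in> J \<times> J" for p
    using sets_oracle_exceedance[OF s_meas J that] space_P sets_P by (simp add: E_def)
  then have E_int: "integrable P (indicator (E p) :: _ \<Rightarrow> real)" if "p \<in> J \<times> J" for p
    using that by (intro integrable_real_indicator) (auto simp: less_top[symmetric])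
  have E_space: "E p \<inter> space P = E p" for p unfolding E_def by blast
  have "(\<integral>y. (\<Sum>i\<in>zeros a J. if y i \<notin> C2 s x a y J \<beta> (x i) then 1 else 0 :: real)\<^sup>2 \<partial>P)
      \<le> (\<integral>y. (\<Sum>p\<in>zeros a J \<times> zeros a J. indicator (E p) y) \<partial>P)"
  proof (rule Bochner_Integration.integral_mono')
    show "integrable P (\<lambda>y. \<Sum>p\<in>zeros a J \<times> zeros a J. indicator (E p) y :: real)"
      using E_int ZJ by (intro Bochner_Integration.integrable_sum) blast
  qed (use miss_count_square_le[OF fin] in \<open>auto simp: E_def indicator_def of_bool_def sum_nonneg\<close>)
  also have "\<dots> = (\<Sum>p\<in>zeros a J \<times> zeros a J. measure P (E p))"
    using E_int ZJ by (subst Bochner_Integration.integral_sum) (auto simp: E_space)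
  also have "\<dots> = (real (card (zeros a J)))\<^sup>2 * (\<Sum>p\<in>J \<times> J. pair_weight x a J p * measure P (E p))"
    unfolding E_def by (rule sum_measure_oracle_exceedance[OF sets_P s_meas exch J Z])
  also have "(\<Sum>p\<in>J \<times> J. pair_weight x a J p * measure P (E p))
      = (\<integral>y. (\<Sum>p\<in>J \<times> J. pair_weight x a J p * indicator (E p) y) \<partial>P)"
    using E_int by (subst Bochner_Integration.integral_sum) (auto simp: E_space)
  also have "\<dots> \<le> \<beta>\<^sup>2"
  proof (rule integral_le_const)
    show "integrable P (\<lambda>y. \<Sum>p\<in>J \<times> J. pair_weight x a J p * indicator (E p) y)"
      using E_int by (intro Bochner_Integration.integrable_sum integrable_mult_right) blast
    show "AE y in P. (\<Sum>p\<in>J \<times> J. pair_weight x a J p * indicator (E p) y) \<le> \<beta>\<^sup>2"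
      using oracle_exceedance_le[OF fin Z] by (intro AE_I2) (simp add: E_def indicator_def of_bool_def)
  qed
  finally show ?thesis by (simp add: mult_left_mono)
qed

section \<open>Conditioning on independent labels\<close>

lemma has_bochner_integral_indicator_mult_finite_range:
  fixes \<psi> :: "'b \<Rightarrow> real"
  assumes M: "finite_measure M" and Yr: "Yr \<in> measurable M N" and G: "G \<in> sets M"
    and \<psi>: "\<psi> \<in> borel_measurable N" and fin: "finite (\<psi> ` space N)"
  shows "has_bochner_integral M (\<lambda>\<omega>. indicator G \<omega> * \<psi> (Yr \<omega>))
    (\<Sum>v\<in>\<psi> ` space N. v * measure M {\<omega> \<in> G. Yr \<omega> \<in> \<psi> -` {v} \<inter> space N})"
proof -
  interpret finite_measure M by (rule M)
  define A where "A v = {\<omega> \<in> G. Yr \<omega> \<in> \<psi> -` {v} \<inter> space N}" for v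
  have A_sets: "A v \<in> sets M" for v
  proof -
    have "A v = G \<inter> (Yr -` (\<psi> -` {v} \<inter> space N) \<inter> space M)"
      using sets.sets_into_space[OF G] by (auto simp: A_def)
    then show ?thesis using G measurable_sets[OF Yr measurable_sets[OF \<psi>]] by simp
  qed
  have "has_bochner_integral M (\<lambda>\<omega>. \<Sum>v\<in>\<psi> ` space N. v * indicator (A v) \<omega>)
      (\<Sum>v\<in>\<psi> ` space N. v * measure M (A v))"
    using A_sets
    by (intro has_bochner_integral_sum has_bochner_integral_mult_right has_bochner_integral_real_indicator)
       (auto simp: less_top[symmetric])
  moreover have "indicator G \<omega> * \<psi> (Yr \<omega>) = (\<Sum>v\<in>\<psi> ` space N. v * indicator (A v) \<omega>)"
    if "\<omega> \<in> space M" for \<omega>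
  proof -
    have "(\<Sum>v\<in>\<psi> ` space N. v * indicator (A v) \<omega>)
        = (\<Sum>v\<in>\<psi> ` space N. if v = \<psi> (Yr \<omega>) then indicator G \<omega> * \<psi> (Yr \<omega>) else 0)"
      using measurable_space[OF Yr that] by (intro sum.cong) (auto simp: A_def indicator_def)
    also have "\<dots> = indicator G \<omega> * \<psi> (Yr \<omega>)"
      using fin measurable_space[OF Yr that] by simp
    finally show ?thesis by simp
  qed
  ultimately show ?thesis unfolding A_def by (simp cong: has_bochner_integral_cong)
qed

lemma has_bochner_integral_indicator_mult_independent:
  fixes \<psi> :: "'b \<Rightarrow> real"
  assumes M: "prob_space M" and Yr: "Yr \<in> measurable M N" and G: "G \<in> sets M"
    and indep: "\<forall>B\<in>sets N. measure M {\<omega> \<in> G. Yr \<omega> \<in> B}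
                  = measure M G * measure M {\<omega> \<in> space M. Yr \<omega> \<in> B}"
    and \<psi>: "\<psi> \<in> borel_measurable N" and fin: "finite (\<psi> ` space N)"
  shows "has_bochner_integral M (\<lambda>\<omega>. indicator G \<omega> * \<psi> (Yr \<omega>)) (measure M G * (\<integral>\<omega>. \<psi> (Yr \<omega>) \<partial>M))"
proof -
  interpret prob_space M by (rule M)
  have fm: "finite_measure M" by unfold_locales
  have "has_bochner_integral M (\<lambda>\<omega>. indicator (space M) \<omega> * \<psi> (Yr \<omega>))
      (\<Sum>v\<in>\<psi> ` space N. v * measure M {\<omega> \<in> space M. Yr \<omega> \<in> \<psi> -` {v} \<inter> space N})"
    by (rule has_bochner_integral_indicator_mult_finite_range[OF fm Yr sets.top \<psi> fin])
  then have "(\<integral>\<omega>. \<psi> (Yr \<omega>) \<partial>M)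
      = (\<Sum>v\<in>\<psi> ` space N. v * measure M {\<omega> \<in> space M. Yr \<omega> \<in> \<psi> -` {v} \<inter> space N})"
    by (simp add: has_bochner_integral_iff cong: Bochner_Integration.integral_cong)
  moreover have "(\<Sum>v\<in>\<psi> ` space N. v * measure M {\<omega> \<in> G. Yr \<omega> \<in> \<psi> -` {v} \<inter> space N})
      = measure M G * (\<Sum>v\<in>\<psi> ` space N. v * measure M {\<omega> \<in> space M. Yr \<omega> \<in> \<psi> -` {v} \<inter> space N})"
  proof -
    have "measure M {\<omega> \<in> G. Yr \<omega> \<in> \<psi> -` {v} \<inter> space N}
        = measure M G * measure M {\<omega> \<in> space M. Yr \<omega> \<in> \<psi> -` {v} \<inter> space N}" for v
    proof -
      have "\<psi> -` {v} \<inter> space N \<in> sets N" by (rule measurable_sets[OF \<psi>]) simp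
      with indep show ?thesis by blast
    qed
    then show ?thesis by (simp add: sum_distrib_left mult_ac)
  qed
  ultimately show ?thesis
    using has_bochner_integral_indicator_mult_finite_range[OF fm Yr G \<psi> fin] by simp
qed

lemma integral_independent_label_le:
  fixes \<psi> :: "'l \<Rightarrow> 'b \<Rightarrow> real"
  assumes M: "prob_space M" and Yr: "Yr \<in> measurable M N"
    and fin: "finite \<Lambda>" and Lr: "\<forall>\<omega>\<in>space M. Lr \<omega> \<in> \<Lambda>"
    and Lr_sets: "\<forall>l\<in>\<Lambda>. {\<omega> \<in> space M. Lr \<omega> = l} \<in> sets M"
    and indep: "\<forall>l\<in>\<Lambda>. \<forall>B\<in>sets N. measure M {\<omega> \<in> space M. Lr \<omega> = l \<and> Yr \<omega> \<in> B}
      = measure M {\<omega> \<in> space M. Lr \<omega> = l} * measure M {\<omega> \<in> space M. Yr \<omega> \<in> B}"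
    and \<psi>: "\<forall>l\<in>\<Lambda>. \<psi> l \<in> borel_measurable N" and \<psi>_fin: "\<forall>l\<in>\<Lambda>. finite (\<psi> l ` space N)"
    and bound: "\<forall>l\<in>\<Lambda>. (\<integral>y. \<psi> l y \<partial>distr M N Yr) \<le> c"
  shows "(\<integral>\<omega>. \<psi> (Lr \<omega>) (Yr \<omega>) \<partial>M) \<le> c"
proof -
  interpret prob_space M by (rule M)
  define G where "G l = {\<omega> \<in> space M. Lr \<omega> = l}" for l
  have "has_bochner_integral M (\<lambda>\<omega>. \<Sum>l\<in>\<Lambda>. indicator (G l) \<omega> * \<psi> l (Yr \<omega>))
      (\<Sum>l\<in>\<Lambda>. measure M (G l) * (\<integral>\<omega>. \<psi> l (Yr \<omega>) \<partial>M))"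
  proof (intro has_bochner_integral_sum has_bochner_integral_indicator_mult_independent[OF M Yr])
    fix l assume "l \<in> \<Lambda>"
    then show "G l \<in> sets M" "\<psi> l \<in> borel_measurable N" "finite (\<psi> l ` space N)"
      using Lr_sets \<psi> \<psi>_fin by (auto simp: G_def)
    have "{\<omega> \<in> G l. Yr \<omega> \<in> B} = {\<omega> \<in> space M. Lr \<omega> = l \<and> Yr \<omega> \<in> B}" for B
      by (auto simp: G_def)
    then show "\<forall>B\<in>sets N. measure M {\<omega> \<in> G l. Yr \<omega> \<in> B}
        = measure M (G l) * measure M {\<omega> \<in> space M. Yr \<omega> \<in> B}"
      using indep \<open>l \<in> \<Lambda>\<close> unfolding G_def by presburger
  qed
  moreover have "(\<Sum>l\<in>\<Lambda>. indicator (G l) \<omega> * \<psi> l (Yr \<omega>)) = \<psi> (Lr \<omega>) (Yr \<omega>)"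
    if "\<omega> \<in> space M" for \<omega>
    using fin Lr that by (simp add: G_def indicator_def if_distrib sum.delta cong: sum.cong)
  ultimately have "(\<integral>\<omega>. \<psi> (Lr \<omega>) (Yr \<omega>) \<partial>M) = (\<Sum>l\<in>\<Lambda>. measure M (G l) * (\<integral>y. \<psi> l y \<partial>distr M N Yr))"
    using \<psi> Yr by (simp add: has_bochner_integral_iff integral_distr cong: Bochner_Integration.integral_cong)
  also have "\<dots> \<le> (\<Sum>l\<in>\<Lambda>. measure M (G l) * c)"
    using bound by (intro sum_mono mult_left_mono) auto
  also have "\<dots> = c"
  proof -
    have "(\<Sum>l\<in>\<Lambda>. measure M (G l)) = measure M (\<Union>l\<in>\<Lambda>. G l)"
      using fin Lr_sets
      by (intro finite_measure_finite_Union[symmetric]) (auto simp: G_def disjoint_family_on_def)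
    also have "(\<Union>l\<in>\<Lambda>. G l) = space M" using Lr by (auto simp: G_def)
    finally show ?thesis by (simp add: sum_distrib_right[symmetric] prob_space)
  qed
  finally show ?thesis .
qed

lemma singleton_sets_PiM_count_space:
  assumes "finite I" and "f \<in> extensional I"
  shows "{f} \<in> sets (PiM I (\<lambda>_. count_space UNIV))"
proof -
  have "{f} = PiE I (\<lambda>i. {f i})" using assms(2) by (rule PiE_singleton[symmetric])
  then show ?thesis using assms(1) by (auto intro!: sets_PiM_I_finite)
qed

section \<open>Splitting into blocks\<close>

lemma integral_square_sum_le:
  fixes T :: "'l \<Rightarrow> 'a \<Rightarrow> real" and N c :: "'l \<Rightarrow> real"
  assumes fin: "finite \<Lambda>" and N: "\<forall>l\<in>\<Lambda>. N l > 0"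
    and int: "\<forall>l\<in>\<Lambda>. integrable P (\<lambda>y. (T l y)\<^sup>2)"
    and bound: "\<forall>l\<in>\<Lambda>. (\<integral>y. (T l y)\<^sup>2 \<partial>P) \<le> (N l * c l)\<^sup>2"
  shows "(\<integral>y. (\<Sum>l\<in>\<Lambda>. T l y)\<^sup>2 \<partial>P) \<le> (\<Sum>l\<in>\<Lambda>. (N l)\<^sup>2) * (\<Sum>l\<in>\<Lambda>. (c l)\<^sup>2)"
proof -
  have "(\<Sum>l\<in>\<Lambda>. T l y)\<^sup>2 \<le> (\<Sum>l\<in>\<Lambda>. (N l)\<^sup>2) * (\<Sum>l\<in>\<Lambda>. (T l y / N l)\<^sup>2)" for y
  proof -
    have "(\<Sum>l\<in>\<Lambda>. T l y) = (\<Sum>l\<in>\<Lambda>. N l * (T l y / N l))"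
      using N by (intro sum.cong) auto
    then show ?thesis using Cauchy_Schwarz_ineq_sum[of N "\<lambda>l. T l y / N l" \<Lambda>] by simp
  qed
  then have "(\<integral>y. (\<Sum>l\<in>\<Lambda>. T l y)\<^sup>2 \<partial>P)
      \<le> (\<integral>y. (\<Sum>l\<in>\<Lambda>. (N l)\<^sup>2) * (\<Sum>l\<in>\<Lambda>. (T l y)\<^sup>2 / (N l)\<^sup>2) \<partial>P)"
    using int by (intro Bochner_Integration.integral_mono') (auto simp: power_divide sum_nonneg)
  also have "\<dots> = (\<Sum>l\<in>\<Lambda>. (N l)\<^sup>2) * (\<Sum>l\<in>\<Lambda>. (\<integral>y. (T l y)\<^sup>2 \<partial>P) / (N l)\<^sup>2)"
    using int by (simp add: Bochner_Integration.integral_sum)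
  also have "\<dots> \<le> (\<Sum>l\<in>\<Lambda>. (N l)\<^sup>2) * (\<Sum>l\<in>\<Lambda>. (c l)\<^sup>2)"
  proof (intro mult_left_mono sum_mono)
    fix l assume "l \<in> \<Lambda>"
    with N bound show "(\<integral>y. (T l y)\<^sup>2 \<partial>P) / (N l)\<^sup>2 \<le> (c l)\<^sup>2"
      by (simp add: divide_le_eq power_mult_distrib mult.commute)
  qed (simp add: sum_nonneg)
  finally show ?thesis .
qed

definition block_misses :: "('x \<Rightarrow> 'y \<Rightarrow> real) \<Rightarrow> (nat \<Rightarrow> 'x) \<Rightarrow> (nat \<Rightarrow> bool) \<Rightarrow> (nat \<Rightarrow> 'y)
    \<Rightarrow> (nat \<Rightarrow> nat) \<Rightarrow> nat \<Rightarrow> nat \<Rightarrow> real \<Rightarrow> nat \<Rightarrow> real" where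
  "block_misses s x a y lab n L \<alpha> l =
     (\<Sum>i\<in>zeros a (Ubar n a lab l).
        if y i \<notin> C2 s x a y (Ubar n a lab l) (alpha_l n L a lab \<alpha> l) (x i) then 1 else 0)"

lemma zeros_Ubar: "zeros a (Ubar n a lab l) = {i \<in> zeros a {..<n}. lab i = l}"
  by (auto simp: zeros_def Ubar_def Ublk_def)

lemma Ublk_Int_zeros: "Ublk n lab l \<inter> zeros a {..<n} = zeros a (Ubar n a lab l)"
  by (auto simp: zeros_def Ubar_def Ublk_def)

lemma miscov_eq_sum_block_misses:
  assumes "zeros a {..<n} \<noteq> {}"
  shows "miscov s x a y lab n L \<alpha> =
    (\<Sum>l\<in>lab ` zeros a {..<n}. block_misses s x a y lab n L \<alpha> l) / real (card (zeros a {..<n}))"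
proof -
  have "(\<Sum>i\<in>zeros a {..<n}. if y i \<notin> CU s x a y lab n L \<alpha> i then 1 else 0 :: real)
      = (\<Sum>l\<in>lab ` zeros a {..<n}. \<Sum>i\<in>{i\<in>zeros a {..<n}. lab i = l}.
          if y i \<notin> CU s x a y lab n L \<alpha> i then 1 else 0)"
    by (rule sum.image_gen) (simp add: zeros_def)
  also have "\<dots> = (\<Sum>l\<in>lab ` zeros a {..<n}. block_misses s x a y lab n L \<alpha> l)"
    unfolding block_misses_def zeros_Ubar
    by (intro sum.cong refl) (auto simp: CU_def)
  finally show ?thesis using assms by (simp add: miscov_def)
qed

lemma sum_square_card_blocks_times_alpha_l:
  assumes lab: "\<forall>i<n. lab i < L" and Z: "zeros a {..<n} \<noteq> {}"
  shows "(\<Sum>l\<in>lab ` zeros a {..<n}. (real (card (zeros a (Ubar n a lab l))))\<^sup>2)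
      * (\<Sum>l\<in>lab ` zeros a {..<n}. (alpha_l n L a lab \<alpha> l)\<^sup>2)
    = (real (card (zeros a {..<n})))\<^sup>2 * \<alpha>\<^sup>2"
proof -
  let ?\<Lambda> = "lab ` zeros a {..<n}" and ?N = "\<lambda>l. real (card (zeros a (Ubar n a lab l)))"
  define D where "D = (\<Sum>l\<in>?\<Lambda>. (?N l)\<^sup>2)"
  have finZ: "finite (zeros a {..<n})" by (simp add: zeros_def)
  have "(\<Sum>l<L. (real (card (Ublk n lab l \<inter> zeros a {..<n})))\<^sup>2) = D"
    unfolding D_def Ublk_Int_zeros
  proof (rule sum.mono_neutral_right)
    show "?\<Lambda> \<subseteq> {..<L}" using lab by (auto simp: zeros_def)
    show "\<forall>l\<in>{..<L} - ?\<Lambda>. (?N l)\<^sup>2 = 0" using finZ by (auto simp: zeros_Ubar card_eq_0_iff)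
  qed simp
  then have alpha: "alpha_l n L a lab \<alpha> l = ?N l * real (card (zeros a {..<n})) / D * \<alpha>" for l
    by (simp add: alpha_l_def Ublk_Int_zeros)
  have "D > 0"
    unfolding D_def using Z finZ by (intro sum_pos) (auto simp: zeros_Ubar card_gt_0_iff)
  moreover have "(\<Sum>l\<in>?\<Lambda>. (alpha_l n L a lab \<alpha> l)\<^sup>2) = (real (card (zeros a {..<n})) * \<alpha> / D)\<^sup>2 * D"
    unfolding alpha D_def sum_distrib_left
    by (intro sum.cong refl) (simp add: power_mult_distrib power_divide)
  ultimately show ?thesis
    unfolding D_def[symmetric] by (simp add: power_mult_distrib power_divide power2_eq_square)
qed

lemma block_misses_bounds:
  "0 \<le> block_misses s x a y lab n L \<alpha> l \<and>
   block_misses s x a y lab n L \<alpha> l \<le> real (card (zeros a (Ubar n a lab l)))"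
proof -
  have "block_misses s x a y lab n L \<alpha> l \<le> (\<Sum>i\<in>zeros a (Ubar n a lab l). 1)"
    unfolding block_misses_def by (rule sum_mono) simp
  then show ?thesis by (simp add: block_misses_def sum_nonneg)
qed

lemma borel_measurable_block_misses:
  assumes s_meas: "\<forall>xv. (\<lambda>yv. s xv yv) \<in> borel_measurable Ysp"
  shows "(\<lambda>y. block_misses s x a y lab n L \<alpha> l) \<in> borel_measurable (PiM {..<n} (\<lambda>_. Ysp))"
  unfolding block_misses_def
proof (rule borel_measurable_sum)
  have "Ubar n a lab l \<subseteq> {..<n}" by (auto simp: Ubar_def Ublk_def)
  moreover fix i assume "i \<in> zeros a (Ubar n a lab l)"
  then have "i \<in> Ubar n a lab l" by (simp add: zeros_def)
  ultimately show "(\<lambda>y. if y i \<notin> C2 s x a y (Ubar n a lab l) (alpha_l n L a lab \<alpha> l) (x i) then 1 else 0 :: real)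
      \<in> borel_measurable (PiM {..<n} (\<lambda>_. Ysp))"
    by (rule borel_measurable_miss[OF s_meas])
qed

lemma miscov_second_moment_fixed_labels_le:
  fixes P :: "(nat \<Rightarrow> 'y) measure"
  assumes P: "prob_space P" and sets_P: "sets P = sets (PiM {..<n} (\<lambda>_. Ysp))"
    and s_meas: "\<forall>xv. (\<lambda>yv. s xv yv) \<in> borel_measurable Ysp"
    and exch: "class_exchangeable P Ysp n x"
    and lab: "\<forall>i<n. lab i < L" and Z: "zeros a {..<n} \<noteq> {}"
  shows "(\<integral>y. (miscov s x a y lab n L \<alpha>)\<^sup>2 \<partial>P) \<le> \<alpha>\<^sup>2"
proof -
  interpret prob_space P by (rule P)
  let ?\<Lambda> = "lab ` zeros a {..<n}" and ?card_Z = "real (card (zeros a {..<n}))"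
  let ?T = "\<lambda>y. block_misses s x a y lab n L \<alpha>" and ?N = "\<lambda>l. real (card (zeros a (Ubar n a lab l)))"
  have N0: "?card_Z > 0" using Z by (simp add: zeros_def card_gt_0_iff)
  have T_int: "integrable P (\<lambda>y. (?T y l)\<^sup>2)" for l
  proof (rule integrable_const_bound[where B="(?N l)\<^sup>2"])
    show "AE y in P. norm ((?T y l)\<^sup>2) \<le> (?N l)\<^sup>2"
    proof (rule AE_I2)
      fix y
      show "norm ((?T y l)\<^sup>2) \<le> (?N l)\<^sup>2"
        using block_misses_bounds[of s x a y lab n L \<alpha> l] by (auto intro: power_mono)
    qed
    have "(\<lambda>y. ?T y l) \<in> borel_measurable P"
      unfolding measurable_cong_sets[OF sets_P refl] by (rule borel_measurable_block_misses[OF s_meas])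
    then show "(\<lambda>y. (?T y l)\<^sup>2) \<in> borel_measurable P" by measurable
  qed
  have T_bound: "(\<integral>y. (?T y l)\<^sup>2 \<partial>P) \<le> (?N l * alpha_l n L a lab \<alpha> l)\<^sup>2" if "l \<in> ?\<Lambda>" for l
  proof -
    have "Ubar n a lab l \<subseteq> {..<n}" by (auto simp: Ubar_def Ublk_def)
    moreover have "zeros a (Ubar n a lab l) \<noteq> {}" using that by (auto simp: zeros_Ubar)
    ultimately show ?thesis
      unfolding block_misses_def power_mult_distrib
      by (rule block_second_moment_le[OF P sets_P s_meas exch])
  qed
  have "(\<integral>y. (miscov s x a y lab n L \<alpha>)\<^sup>2 \<partial>P) = (\<integral>y. (\<Sum>l\<in>?\<Lambda>. ?T y l)\<^sup>2 \<partial>P) / ?card_Z\<^sup>2"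
    by (simp add: miscov_eq_sum_block_misses[OF Z] power_divide)
  also have "\<dots> \<le> (\<Sum>l\<in>?\<Lambda>. (?N l)\<^sup>2) * (\<Sum>l\<in>?\<Lambda>. (alpha_l n L a lab \<alpha> l)\<^sup>2) / ?card_Z\<^sup>2"
  proof (intro divide_right_mono integral_square_sum_le ballI)
    fix l assume "l \<in> ?\<Lambda>"
    then show "?N l > 0" unfolding zeros_Ubar by (auto simp: card_gt_0_iff zeros_def)
  qed (use T_int T_bound in \<open>auto simp: zeros_def\<close>)
  also have "\<dots> = \<alpha>\<^sup>2"
    using N0 by (simp add: sum_square_card_blocks_times_alpha_l[OF lab Z])
  finally show ?thesis .
qed

lemma miscov_cong:
  assumes y: "\<forall>i<n. y i = y' i" and lab: "\<forall>i<n. lab i = lab' i"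
  shows "miscov s x a y lab n L \<alpha> = miscov s x a y' lab' n L \<alpha>"
proof -
  have Ublk: "Ublk n lab l = Ublk n lab' l" for l using lab by (auto simp: Ublk_def)
  then have Ubar: "Ubar n a lab l = Ubar n a lab' l" for l by (simp add: Ubar_def)
  have Pi_cdf: "Pi_cdf s x a y (Ubar n a lab' l) = Pi_cdf s x a y' (Ubar n a lab' l)" for l
    using y unfolding Pi_cdf_def sbar_def by (intro ext arg_cong2[where f="(+)"] sum.cong refl)
      (auto simp: Ubar_def Ublk_def)
  have "CU s x a y lab n L \<alpha> i = CU s x a y' lab' n L \<alpha> i" if "i < n" for i
    using lab that by (simp add: CU_def C2_def Ubar Pi_cdf alpha_l_def Ublk)
  then show ?thesis
    unfolding miscov_def by (intro if_cong refl arg_cong2[where f="(/)"] sum.cong) (auto simp: zeros_def y)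
qed

lemma borel_measurable_miscov:
  assumes s_meas: "\<forall>xv. (\<lambda>yv. s xv yv) \<in> borel_measurable Ysp"
  shows "(\<lambda>y. miscov s x a y lab n L \<alpha>) \<in> borel_measurable (PiM {..<n} (\<lambda>_. Ysp))"
proof -
  have "(\<lambda>y. if y i \<notin> CU s x a y lab n L \<alpha> i then 1 else 0 :: real)
      \<in> borel_measurable (PiM {..<n} (\<lambda>_. Ysp))" if "i \<in> zeros a {..<n}" for i
  proof -
    have "Ubar n a lab (lab i) \<subseteq> {..<n}" "i \<in> Ubar n a lab (lab i)"
      using that by (auto simp: Ubar_def Ublk_def zeros_def)
    then show ?thesis unfolding CU_def by (rule borel_measurable_miss[OF s_meas])
  qed
  then show ?thesis unfolding miscov_def by measurable
qed

lemma miscov_in_grid: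
  "miscov s x a y lab n L \<alpha> \<in> (\<lambda>k. real k / real (card (zeros a {..<n}))) ` {..card (zeros a {..<n})}"
proof -
  have fin: "finite (zeros a {..<n})" by (simp add: zeros_def)
  let ?miss = "{i \<in> zeros a {..<n}. y i \<notin> CU s x a y lab n L \<alpha> i}"
  have "miscov s x a y lab n L \<alpha> = real (card ?miss) / real (card (zeros a {..<n}))"
    using fin by (simp add: miscov_def sum.If_cases Int_def conj_commute)
  moreover have "card ?miss \<le> card (zeros a {..<n})" using fin by (intro card_mono) auto
  ultimately show ?thesis by auto
qed

lemma finite_image_miscov: "finite ((\<lambda>y. f (miscov s x a y lab n L \<alpha>)) ` S)"
proof (rule finite_subset)
  show "(\<lambda>y. f (miscov s x a y lab n L \<alpha>)) ` S
      \<subseteq> f ` (\<lambda>k. real k / real (card (zeros a {..<n}))) ` {..card (zeros a {..<n})}"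
    using miscov_in_grid by blast
qed simp

theorem corollary2:
  fixes M :: "'a measure" and Ysp :: "'y measure"
    and s :: "'x \<Rightarrow> 'y \<Rightarrow> real"
    and x :: "nat \<Rightarrow> 'x" and a :: "nat \<Rightarrow> bool"
    and Y :: "'a \<Rightarrow> nat \<Rightarrow> 'y" and lab :: "'a \<Rightarrow> nat \<Rightarrow> nat"
    and n L :: nat and \<alpha> :: real
  assumes M: "prob_space M"
    and s_meas: "\<forall>xv. (\<lambda>yv. s xv yv) \<in> borel_measurable Ysp"
    and Y_meas: "(\<lambda>\<omega>. restrict (Y \<omega>) {..<n}) \<in> measurable M (PiM {..<n} (\<lambda>_. Ysp))"
    and exch: "\<forall>\<sigma>. bij_betw \<sigma> {..<n} {..<n} \<and> (\<forall>i<n. x (\<sigma> i) = x i) \<longrightarrow>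
        distr M (PiM {..<n} (\<lambda>_. Ysp)) (\<lambda>\<omega>. restrict (\<lambda>i. Y \<omega> (\<sigma> i)) {..<n})
      = distr M (PiM {..<n} (\<lambda>_. Ysp)) (\<lambda>\<omega>. restrict (Y \<omega>) {..<n})"
    and lab_range: "\<forall>\<omega>. \<forall>i<n. lab \<omega> i < L"
    and lab_meas: "(\<lambda>\<omega>. restrict (lab \<omega>) {..<n})
                     \<in> measurable M (PiM {..<n} (\<lambda>_. count_space UNIV))"
    and indep: "\<forall>A \<in> sets (PiM {..<n} (\<lambda>_. count_space UNIV)).
                 \<forall>B \<in> sets (PiM {..<n} (\<lambda>_. Ysp)).
        measure M {\<omega> \<in> space M. restrict (lab \<omega>) {..<n} \<in> A \<and> restrict (Y \<omega>) {..<n} \<in> B}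
      = measure M {\<omega> \<in> space M. restrict (lab \<omega>) {..<n} \<in> A}
        * measure M {\<omega> \<in> space M. restrict (Y \<omega>) {..<n} \<in> B}"
    and N0_pos: "\<exists>i<n. \<not> a i"
  shows "(\<integral>\<omega>. (miscov s x a (Y \<omega>) (lab \<omega>) n L \<alpha>)\<^sup>2 \<partial>M) \<le> \<alpha>\<^sup>2"
proof -
  let ?PI = "PiM {..<n} (\<lambda>_. Ysp)" and ?\<Lambda> = "PiE {..<n} (\<lambda>_. {..<L})"
  let ?Yr = "\<lambda>\<omega>. restrict (Y \<omega>) {..<n}" and ?Lr = "\<lambda>\<omega>. restrict (lab \<omega>) {..<n}"
  have label_sets: "{l} \<in> sets (PiM {..<n} (\<lambda>_. count_space UNIV))" if "l \<in> ?\<Lambda>" for l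
    using that by (intro singleton_sets_PiM_count_space) (auto simp: PiE_def)
  have "(\<integral>\<omega>. (miscov s x a (Y \<omega>) (lab \<omega>) n L \<alpha>)\<^sup>2 \<partial>M)
      = (\<integral>\<omega>. (miscov s x a (?Yr \<omega>) (?Lr \<omega>) n L \<alpha>)\<^sup>2 \<partial>M)"
    by (intro Bochner_Integration.integral_cong refl arg_cong[where f="\<lambda>r. r\<^sup>2"] miscov_cong) auto
  also have "\<dots> \<le> \<alpha>\<^sup>2"
  proof (rule integral_independent_label_le[OF M Y_meas, where \<Lambda>="?\<Lambda>" and Lr="?Lr"
      and \<psi>="\<lambda>l y. (miscov s x a y l n L \<alpha>)\<^sup>2"]; (intro ballI)?)
    show "finite ?\<Lambda>" by (simp add: finite_PiE)
    show "?Lr \<omega> \<in> ?\<Lambda>" for \<omega> using lab_range by auto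
    fix l assume l: "l \<in> ?\<Lambda>"
    show "{\<omega> \<in> space M. ?Lr \<omega> = l} \<in> sets M"
      using measurable_sets[OF lab_meas label_sets[OF l]] by (simp add: vimage_def Int_def conj_commute)
    show "measure M {\<omega> \<in> space M. ?Lr \<omega> = l \<and> ?Yr \<omega> \<in> B}
        = measure M {\<omega> \<in> space M. ?Lr \<omega> = l} * measure M {\<omega> \<in> space M. ?Yr \<omega> \<in> B}"
      if "B \<in> sets ?PI" for B
      using indep label_sets[OF l] that by auto
    show "(\<lambda>y. (miscov s x a y l n L \<alpha>)\<^sup>2) \<in> borel_measurable ?PI"
      using borel_measurable_miscov[OF s_meas] by measurable
    show "finite ((\<lambda>y. (miscov s x a y l n L \<alpha>)\<^sup>2) ` space ?PI)"
      by (rule finite_image_miscov)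
    show "(\<integral>y. (miscov s x a y l n L \<alpha>)\<^sup>2 \<partial>distr M ?PI ?Yr) \<le> \<alpha>\<^sup>2"
      using l N0_pos
      by (intro miscov_second_moment_fixed_labels_le[OF prob_space.prob_space_distr[OF M Y_meas] _ s_meas
            class_exchangeable_distr[OF Y_meas exch]]) (auto simp: zeros_def PiE_def)
  qed
  finally show ?thesis .
qed

end
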